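(* Let $(\mathrm{Con},\sqsubseteq,(s_i)_{i\in G})$ be a spatial constraint system with distributed spaces $(\Delta_I)_{I\subseteq G}$, let $I\subseteq G$ and $c,e\in\mathrm{Con}$, and suppose $c\sqsupseteq\Delta_I(e)$. If $e$ is compact and $\pi_I(c)\sqsupseteq e$, then there exists a finite set $J\subseteq I$ such that $c\sqsupseteq\Delta_J(e)$.
   Context: A constraint system (cs) is a complete lattice $(\mathrm{Con},\sqsubseteq)$ with join $\sqcup$, bottom $\mathit{true}$. A space function is a continuous (directed-join preserving) self-map $f$ on $\mathrm{Con}$ with $f(\mathit{true})=\mathit{true}$ and $f(c\sqcup d)=f(c)\sqcup f(d)$; $\mathcal{S}(\mathrm{Con})$ denotes the set of space functions ordered pointwise ($f\preceq g$ iff $f(c)\sqsubseteq g(c)$ for all $c$). A spatial constraint system $(\mathrm{Con},\sqsubseteq,(s_i)_{i\in G})$ is a cs with space functions $s_i$ indexed by an arbitrary (possibly infinite) set $G$. Distributed spaces: $\Delta_I=\max\{f\in\mathcal{S}(\mathrm{Con}) : f\preceq s_i\text{ for all }i\in I\}$ (this maximum exists). $\pi_i(c)=\bigsqcup\{e' : c\sqsupseteq s_i(e')\}$ and $\pi_I(c)=\bigsqcup\{\pi_i(c): i\in I\}$. An element $e$ is compact if for every directed set $D\subseteq\mathrm{Con}$, $e\sqsubseteq\bigsqcup D$ implies $e\sqsubseteq d$ for some $d\in D$. *)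

theory Defs
  imports Main
begin

text \<open>Constraint systems: a complete lattice 'a (order \<le> is \<sqsubseteq>, sup is the join,
  bot is true). Directed sets are nonempty and have upper bounds of pairs.\<close>

definition directed :: "'a::complete_lattice set \<Rightarrow> bool" where
  "directed D \<longleftrightarrow> D \<noteq> {} \<and> (\<forall>x\<in>D. \<forall>y\<in>D. \<exists>z\<in>D. x \<le> z \<and> y \<le> z)"

definition continuous_map :: "('a::complete_lattice \<Rightarrow> 'a) \<Rightarrow> bool" where
  "continuous_map f \<longleftrightarrow> (\<forall>D. directed D \<longrightarrow> f (Sup D) = Sup (f ` D))"

definition space_fun :: "('a::complete_lattice \<Rightarrow> 'a) \<Rightarrow> bool" where
  "space_fun f \<longleftrightarrow> continuous_map f \<and> f bot = bot \<and> (\<forall>c d. f (sup c d) = sup (f c) (f d))"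

definition spatial_cs :: "'i set \<Rightarrow> ('i \<Rightarrow> 'a::complete_lattice \<Rightarrow> 'a) \<Rightarrow> bool" where
  "spatial_cs G s \<longleftrightarrow> (\<forall>i\<in>G. space_fun (s i))"

definition Delta :: "('i \<Rightarrow> 'a::complete_lattice \<Rightarrow> 'a) \<Rightarrow> 'i set \<Rightarrow> 'a \<Rightarrow> 'a" where
  "Delta s I = (GREATEST f. space_fun f \<and> (\<forall>i\<in>I. f \<le> s i))"

definition pi1 :: "('i \<Rightarrow> 'a::complete_lattice \<Rightarrow> 'a) \<Rightarrow> 'i \<Rightarrow> 'a \<Rightarrow> 'a" where
  "pi1 s i c = Sup {e'. s i e' \<le> c}"

definition piI :: "('i \<Rightarrow> 'a::complete_lattice \<Rightarrow> 'a) \<Rightarrow> 'i set \<Rightarrow> 'a \<Rightarrow> 'a" where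
  "piI s I c = Sup {pi1 s i c | i. i \<in> I}"

definition compact :: "'a::complete_lattice \<Rightarrow> bool" where
  "compact e \<longleftrightarrow> (\<forall>D. directed D \<longrightarrow> e \<le> Sup D \<longrightarrow> (\<exists>d\<in>D. e \<le> d))"

end

theory Submission
  imports Defs
begin

text \<open>The projection \<open>\<pi>\<^sub>I(c)\<close> is the join of all \<open>a\<close> with \<open>s\<^sub>i(a) \<sqsubseteq> c\<close> for some \<open>i \<in> I\<close>.
  A compact \<open>e\<close> below it is already below the join of finitely many such \<open>a\<close>; let \<open>J\<close>
  collect their indices. Since \<open>\<Delta>\<^sub>J\<close> is below every \<open>s\<^sub>i\<close> with \<open>i \<in> J\<close> and preserves finite
  joins, \<open>\<Delta>\<^sub>J\<close> maps that join, and hence \<open>e\<close>, below \<open>c\<close>.\<close>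

lemma space_fun_Sup:
  fixes S :: "('a::complete_lattice \<Rightarrow> 'a) set"
  assumes "\<And>f. f \<in> S \<Longrightarrow> space_fun f"
  shows "space_fun (Sup S)"
proof -
  have "continuous_map (Sup S)"
    unfolding continuous_map_def
  proof (intro allI impI)
    fix D :: "'a set"
    assume "directed D"
    then have "(Sup S) (Sup D) = (SUP f\<in>S. SUP x\<in>D. f x)"
      using assms by (simp add: space_fun_def continuous_map_def)
    also have "\<dots> = (SUP x\<in>D. SUP f\<in>S. f x)"
      by (rule SUP_commute)
    finally show "(Sup S) (Sup D) = Sup (Sup S ` D)"
      by (simp add: image_image)
  qed
  moreover have "(Sup S) (sup x y) = sup ((Sup S) x) ((Sup S) y)" for x y
  proof -
    have "(Sup S) (sup x y) = (SUP f\<in>S. sup (f x) (f y))"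
      using assms by (simp add: space_fun_def)
    also have "\<dots> = sup ((Sup S) x) ((Sup S) y)"
      by (simp add: Complete_Lattices.SUP_sup_distrib)
    finally show ?thesis .
  qed
  ultimately show ?thesis
    using assms by (simp add: space_fun_def)
qed

lemma space_fun_mono:
  assumes "space_fun f" and "x \<le> y"
  shows "f x \<le> f y"
  using assms by (metis space_fun_def sup.absorb2 sup.cobounded1)

lemma space_fun_Sup_finite:
  assumes "space_fun f" and "finite A"
  shows "f (Sup A) = Sup (f ` A)"
  using assms(2) by induction (use assms(1) in \<open>simp_all add: space_fun_def\<close>)

lemma Delta_eq_Sup:
  "Delta s J = Sup {f. space_fun f \<and> (\<forall>i\<in>J. f \<le> s i)}"
  unfolding Delta_def
  by (rule Greatest_equality) (auto intro: space_fun_Sup Sup_upper Sup_least)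

lemma space_fun_Delta: "space_fun (Delta s J)"
  unfolding Delta_eq_Sup by (rule space_fun_Sup) simp

lemma Delta_le: "i \<in> J \<Longrightarrow> Delta s J \<le> s i"
  unfolding Delta_eq_Sup by (rule Sup_least) simp

lemma Delta_Sup_le:
  assumes "finite A" and "\<And>a. a \<in> A \<Longrightarrow> \<exists>i\<in>J. s i a \<le> c"
  shows "Delta s J (Sup A) \<le> c"
proof -
  have "Delta s J a \<le> c" if "a \<in> A" for a
  proof -
    from assms(2) that obtain i where "i \<in> J" and "s i a \<le> c"
      by blast
    then show ?thesis
      using Delta_le[of i J s] by (metis le_fun_def order_trans)
  qed
  then show ?thesis
    using space_fun_Sup_finite[OF space_fun_Delta[of s J] assms(1)] by (simp add: Sup_le_iff)
qed

lemma piI_eq_Sup: "piI s I c = Sup (\<Union>i\<in>I. {a. s i a \<le> c})"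
proof -
  have "{pi1 s i c | i. i \<in> I} = (\<lambda>i. Sup {a. s i a \<le> c}) ` I"
    unfolding pi1_def by blast
  then show ?thesis
    unfolding piI_def using SUP_UNION[of id "\<lambda>i. {a. s i a \<le> c}" I] by simp
qed

lemma directed_finite_Sups: "directed {Sup F | F. finite F \<and> F \<subseteq> A}"
  unfolding directed_def
proof (intro conjI ballI)
  fix x y
  assume "x \<in> {Sup F | F. finite F \<and> F \<subseteq> A}" and "y \<in> {Sup F | F. finite F \<and> F \<subseteq> A}"
  then obtain F1 F2 where "finite F1" "F1 \<subseteq> A" "x = Sup F1" "finite F2" "F2 \<subseteq> A" "y = Sup F2"
    by blast
  then show "\<exists>z\<in>{Sup F | F. finite F \<and> F \<subseteq> A}. x \<le> z \<and> y \<le> z"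
    by (intro bexI[of _ "Sup (F1 \<union> F2)"]) (auto intro: Sup_subset_mono)
qed blast

lemma compact_le_Sup_finite:
  assumes "compact e" and "e \<le> Sup A"
  obtains F where "finite F" and "F \<subseteq> A" and "e \<le> Sup F"
proof -
  let ?D = "{Sup F | F. finite F \<and> F \<subseteq> A}"
  have "a \<in> ?D" if "a \<in> A" for a
    using that by (intro CollectI exI[of _ "{a}"]) simp
  then have "Sup A \<le> Sup ?D"
    by (blast intro: Sup_subset_mono)
  with assms obtain d where "d \<in> ?D" and "e \<le> d"
    using directed_finite_Sups[of A] unfolding compact_def by (meson order_trans)
  then show thesis
    using that by blast
qed

lemma finite_subset_UN_finite_index:
  assumes "finite A" and "A \<subseteq> (\<Union>i\<in>I. B i)"
  obtains J where "finite J" and "J \<subseteq> I" and "A \<subseteq> (\<Union>i\<in>J. B i)"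
proof -
  obtain \<F> where "finite \<F>" "\<F> \<subseteq> B ` I" "A \<subseteq> \<Union>\<F>"
    using finite_subset_Union[OF assms] .
  moreover from \<open>finite \<F>\<close> \<open>\<F> \<subseteq> B ` I\<close> obtain J where "J \<subseteq> I" "finite J" "\<F> = B ` J"
    using finite_subset_image by metis
  ultimately show thesis
    using that by blast
qed

theorem mainTheorem4:
  fixes G :: "'i set" and s :: "'i \<Rightarrow> 'a::complete_lattice \<Rightarrow> 'a"
    and I :: "'i set" and c e :: 'a
  assumes "spatial_cs G s"
    and "I \<subseteq> G"
    and "Delta s I e \<le> c"
    and "compact e"
    and "e \<le> piI s I c"
  shows "\<exists>J. finite J \<and> J \<subseteq> I \<and> Delta s J e \<le> c"
proof -
  obtain F where "finite F" and F_sub: "F \<subseteq> (\<Union>i\<in>I. {a. s i a \<le> c})" and "e \<le> Sup F"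
    using compact_le_Sup_finite[OF \<open>compact e\<close>] \<open>e \<le> piI s I c\<close> unfolding piI_eq_Sup by blast
  obtain J where "finite J" and "J \<subseteq> I" and "F \<subseteq> (\<Union>i\<in>J. {a. s i a \<le> c})"
    using finite_subset_UN_finite_index[OF \<open>finite F\<close> F_sub] .
  have "Delta s J e \<le> Delta s J (Sup F)"
    using space_fun_Delta \<open>e \<le> Sup F\<close> by (rule space_fun_mono)
  also have "\<dots> \<le> c"
    using \<open>finite F\<close> \<open>F \<subseteq> (\<Union>i\<in>J. {a. s i a \<le> c})\<close> by (intro Delta_Sup_le) auto
  finally show ?thesis
    using \<open>finite J\<close> \<open>J \<subseteq> I\<close> by blast
qed

end
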